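(* If a hyperideal $I$ of $R$ is 1-absorbing prime but not prime, then $R$ is a local multiplicative hyperring.
   Context: Throughout, $R$ is a commutative multiplicative hyperring: $(R,+)$ is an abelian group and $\circ:R\times R\to P^*(R)$ is a commutative, associative hyperoperation with $a\circ(b+c)\subseteq a\circ b+a\circ c$ and $a\circ(-b)=(-a)\circ b=-(a\circ b)$; $A\circ B=\bigcup_{a\in A,b\in B}a\circ b$. $R$ has an identity $1$ ($a\in a\circ1$); $x$ is a unit if $1\in x\circ y$ for some $y$. Hyperideals are nonempty subsets closed under subtraction and absorbing $r\circ a\subseteq I$; all are assumed $\mathbf{C}$-hyperideals (for every finite product $A=r_1\circ\cdots\circ r_n$, $A\cap I\ne\emptyset$ implies $A\subseteq I$). Prime hyperideal: proper $P$ with $x\circ y\subseteq P\Rightarrow x\in P$ or $y\in P$. 1-absorbing prime hyperideal: proper $I$ such that for all nonunit $x,y,z$, $x\circ y\circ z\subseteq I$ implies $x\circ y\subseteq I$ or $z\in I$. $R$ is local if it has a unique maximal hyperideal. *)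

theory Defs
  imports Main
begin

text \<open>A commutative multiplicative hyperring: the additive abelian group is the
  whole type 'a (class ab_group_add); the hyperoperation is mul :: 'a => 'a => 'a set.\<close>

definition setmul :: "('a \<Rightarrow> 'a \<Rightarrow> 'a set) \<Rightarrow> 'a set \<Rightarrow> 'a set \<Rightarrow> 'a set" where
  "setmul mul A B = (\<Union>a\<in>A. \<Union>b\<in>B. mul a b)"

definition setsum_add :: "'a::ab_group_add set \<Rightarrow> 'a set \<Rightarrow> 'a set" where
  "setsum_add A B = {x + y | x y. x \<in> A \<and> y \<in> B}"

definition comm_mult_hyperring :: "('a::ab_group_add \<Rightarrow> 'a \<Rightarrow> 'a set) \<Rightarrow> bool" where
  "comm_mult_hyperring mul \<longleftrightarrow>
     (\<forall>a b. mul a b \<noteq> {}) \<and>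
     (\<forall>a b. mul a b = mul b a) \<and>
     (\<forall>a b c. setmul mul (mul a b) {c} = setmul mul {a} (mul b c)) \<and>
     (\<forall>a b c. mul a (b + c) \<subseteq> setsum_add (mul a b) (mul a c)) \<and>
     (\<forall>a b. mul a (- b) = uminus ` (mul a b) \<and> mul (- a) b = uminus ` (mul a b))"

definition has_identity :: "('a \<Rightarrow> 'a \<Rightarrow> 'a set) \<Rightarrow> 'a \<Rightarrow> bool" where
  "has_identity mul one \<longleftrightarrow> (\<forall>a. a \<in> mul a one)"

definition hunit :: "('a \<Rightarrow> 'a \<Rightarrow> 'a set) \<Rightarrow> 'a \<Rightarrow> 'a \<Rightarrow> bool" where
  "hunit mul one x \<longleftrightarrow> (\<exists>y. one \<in> mul x y)"

fun hprod :: "('a \<Rightarrow> 'a \<Rightarrow> 'a set) \<Rightarrow> 'a list \<Rightarrow> 'a set" where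
  "hprod mul [] = {}"
| "hprod mul [r] = {r}"
| "hprod mul (r # rs) = setmul mul {r} (hprod mul rs)"

definition hyperideal :: "('a::ab_group_add \<Rightarrow> 'a \<Rightarrow> 'a set) \<Rightarrow> 'a set \<Rightarrow> bool" where
  "hyperideal mul I \<longleftrightarrow> I \<noteq> {} \<and> (\<forall>a\<in>I. \<forall>b\<in>I. a - b \<in> I) \<and>
     (\<forall>r. \<forall>a\<in>I. mul r a \<subseteq> I)"

definition C_hyperideal :: "('a \<Rightarrow> 'a \<Rightarrow> 'a set) \<Rightarrow> 'a set \<Rightarrow> bool" where
  "C_hyperideal mul I \<longleftrightarrow> (\<forall>rs. rs \<noteq> [] \<longrightarrow> hprod mul rs \<inter> I \<noteq> {} \<longrightarrow> hprod mul rs \<subseteq> I)"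

definition prime_hyperideal :: "('a::ab_group_add \<Rightarrow> 'a \<Rightarrow> 'a set) \<Rightarrow> 'a set \<Rightarrow> bool" where
  "prime_hyperideal mul P \<longleftrightarrow> hyperideal mul P \<and> P \<noteq> UNIV \<and>
     (\<forall>x y. mul x y \<subseteq> P \<longrightarrow> x \<in> P \<or> y \<in> P)"

definition one_absorbing_prime :: "('a::ab_group_add \<Rightarrow> 'a \<Rightarrow> 'a set) \<Rightarrow> 'a \<Rightarrow> 'a set \<Rightarrow> bool" where
  "one_absorbing_prime mul one I \<longleftrightarrow> hyperideal mul I \<and> I \<noteq> UNIV \<and>
     (\<forall>x y z. \<not> hunit mul one x \<longrightarrow> \<not> hunit mul one y \<longrightarrow> \<not> hunit mul one z \<longrightarrow>
        setmul mul (mul x y) {z} \<subseteq> I \<longrightarrow> mul x y \<subseteq> I \<or> z \<in> I)"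

definition maximal_hyperideal :: "('a::ab_group_add \<Rightarrow> 'a \<Rightarrow> 'a set) \<Rightarrow> 'a set \<Rightarrow> bool" where
  "maximal_hyperideal mul M \<longleftrightarrow> hyperideal mul M \<and> M \<noteq> UNIV \<and>
     (\<forall>J. hyperideal mul J \<longrightarrow> M \<subseteq> J \<longrightarrow> J = M \<or> J = UNIV)"

definition local_hyperring :: "('a::ab_group_add \<Rightarrow> 'a \<Rightarrow> 'a set) \<Rightarrow> bool" where
  "local_hyperring mul \<longleftrightarrow> (\<exists>!M. maximal_hyperideal mul M)"

end

theory Submission
  imports Defs
begin

text \<open>Pick nonunits x, y outside I with x \<circ> y \<subseteq> I, which exist because I is
  1-absorbing prime but not prime. For every nonunit a, a \<circ> x \<circ> y \<subseteq> I and y \<notin> I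
  force a \<circ> x \<subseteq> I. Hence if a + b were a unit for nonunits a, b, then
  x \<circ> (a + b) \<subseteq> a \<circ> x + b \<circ> x \<subseteq> I would put x into I. So the nonunits are closed
  under addition; they then form a hyperideal containing every proper hyperideal,
  which is therefore the unique maximal one.\<close>

definition nonunits :: "('a \<Rightarrow> 'a \<Rightarrow> 'a set) \<Rightarrow> 'a \<Rightarrow> 'a set" where
  "nonunits mul one = {a. \<not> hunit mul one a}"

lemma
  assumes "comm_mult_hyperring mul"
  shows hmul_commute: "mul a b = mul b a"
    and hmul_assoc: "setmul mul (mul a b) {c} = setmul mul {a} (mul b c)"
    and hmul_add_subset: "mul a (b + c) \<subseteq> setsum_add (mul a b) (mul a c)"
    and hmul_minus_left: "mul (- a) b = mul a (- b)"
  using assms unfolding comm_mult_hyperring_def by auto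

lemma hyperideal_add:
  assumes "hyperideal mul I" "a \<in> I" "b \<in> I"
  shows "a + b \<in> I"
proof -
  have diff: "\<forall>a\<in>I. \<forall>b\<in>I. a - b \<in> I"
    using assms(1) unfolding hyperideal_def by blast
  have "0 \<in> I" using diff assms(2) by (metis diff_self)
  then have "- b \<in> I" using diff assms(3) by (metis diff_0)
  then show ?thesis using diff assms(2) by (metis diff_minus_eq_add)
qed

lemma hyperideal_absorb:
  assumes "hyperideal mul I" "a \<in> I"
  shows "mul r a \<subseteq> I"
  using assms unfolding hyperideal_def by blast

lemma hyperideal_mem_if_mul_unit_subset:
  assumes H: "comm_mult_hyperring mul" and one: "has_identity mul one"
    and I: "hyperideal mul I" and zv: "mul z v \<subseteq> I" and v: "hunit mul one v"
  shows "z \<in> I"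
proof -
  obtain w where vw: "one \<in> mul v w" using v unfolding hunit_def by blast
  have "z \<in> mul z one" using one unfolding has_identity_def by blast
  also have "\<dots> \<subseteq> setmul mul {z} (mul v w)" using vw unfolding setmul_def by blast
  also have "\<dots> = setmul mul (mul z v) {w}" using hmul_assoc[OF H] by metis
  also have "\<dots> \<subseteq> I"
    using zv hyperideal_absorb[OF I] hmul_commute[OF H, of _ w]
    unfolding setmul_def by blast
  finally show ?thesis .
qed

lemma hyperideal_eq_UNIV_if_unit:
  assumes H: "comm_mult_hyperring mul" and one: "has_identity mul one"
    and J: "hyperideal mul J" and a: "a \<in> J" and "hunit mul one a"
  shows "J = UNIV"
proof -
  obtain y where "one \<in> mul a y" using \<open>hunit mul one a\<close> unfolding hunit_def by blast
  then have "one \<in> J" using hyperideal_absorb[OF J a, of y] hmul_commute[OF H, of a y] by blast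
  have "r \<in> J" for r
    using one hyperideal_absorb[OF J \<open>one \<in> J\<close>, of r] hmul_commute[OF H, of r one]
    unfolding has_identity_def by blast
  then show ?thesis by blast
qed

lemma hyperideal_subset_nonunits:
  assumes "comm_mult_hyperring mul" "has_identity mul one"
    and "hyperideal mul J" "J \<noteq> UNIV"
  shows "J \<subseteq> nonunits mul one"
  using hyperideal_eq_UNIV_if_unit[OF assms(1-3)] assms(4) unfolding nonunits_def by blast

lemma one_notin_nonunits:
  assumes "has_identity mul one"
  shows "one \<notin> nonunits mul one"
  using assms unfolding nonunits_def hunit_def has_identity_def by blast

lemma uminus_mem_nonunits:
  assumes H: "comm_mult_hyperring mul" and a: "a \<in> nonunits mul one"
  shows "- a \<in> nonunits mul one"
proof (rule ccontr)
  assume "- a \<notin> nonunits mul one"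
  then obtain w where "one \<in> mul (- a) w" unfolding nonunits_def hunit_def by blast
  then have "hunit mul one a" unfolding hmul_minus_left[OF H] hunit_def by blast
  with a show False unfolding nonunits_def by blast
qed

lemma hmul_subset_nonunits:
  assumes H: "comm_mult_hyperring mul" and a: "a \<in> nonunits mul one"
  shows "mul r a \<subseteq> nonunits mul one"
proof
  fix c assume c: "c \<in> mul r a"
  show "c \<in> nonunits mul one"
  proof (rule ccontr)
    assume "c \<notin> nonunits mul one"
    then obtain w where "one \<in> mul c w" unfolding nonunits_def hunit_def by blast
    with c have "one \<in> setmul mul (mul a r) {w}"
      using hmul_commute[OF H, of a r] unfolding setmul_def by blast
    then have "one \<in> setmul mul {a} (mul r w)" using hmul_assoc[OF H] by metis
    then have "hunit mul one a" unfolding setmul_def hunit_def by blast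
    with a show False unfolding nonunits_def by blast
  qed
qed

lemma local_hyperring_if_nonunits_add_closed:
  assumes H: "comm_mult_hyperring mul" and one: "has_identity mul one"
    and ne: "nonunits mul one \<noteq> {}"
    and add: "\<And>a b. a \<in> nonunits mul one \<Longrightarrow> b \<in> nonunits mul one \<Longrightarrow>
                    a + b \<in> nonunits mul one"
  shows "local_hyperring mul"
proof -
  let ?N = "nonunits mul one"
  have "a - b \<in> ?N" if "a \<in> ?N" "b \<in> ?N" for a b
    using add[OF that(1) uminus_mem_nonunits[OF H that(2)]] by simp
  then have "hyperideal mul ?N"
    unfolding hyperideal_def using ne hmul_subset_nonunits[OF H] by blast
  moreover have "?N \<noteq> UNIV" using one_notin_nonunits[OF one] by blast
  ultimately have "maximal_hyperideal mul ?N"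
    and "\<And>M. maximal_hyperideal mul M \<Longrightarrow> M = ?N"
    using hyperideal_subset_nonunits[OF H one] unfolding maximal_hyperideal_def by blast+
  then show ?thesis unfolding local_hyperring_def by blast
qed

lemma one_absorbing_prime_not_prime_obtain:
  assumes H: "comm_mult_hyperring mul" and one: "has_identity mul one"
    and I: "one_absorbing_prime mul one I" and "\<not> prime_hyperideal mul I"
  obtains x y where "mul x y \<subseteq> I" "x \<notin> I" "y \<notin> I"
    "x \<in> nonunits mul one" "y \<in> nonunits mul one"
proof -
  have hI: "hyperideal mul I" and "I \<noteq> UNIV"
    using I unfolding one_absorbing_prime_def by blast+
  then obtain x y where xy: "mul x y \<subseteq> I" "x \<notin> I" "y \<notin> I"
    using assms(4) unfolding prime_hyperideal_def by blast
  moreover have "x \<in> nonunits mul one"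
    using hyperideal_mem_if_mul_unit_subset[OF H one hI, of y x] xy hmul_commute[OF H]
    unfolding nonunits_def by auto
  moreover have "y \<in> nonunits mul one"
    using hyperideal_mem_if_mul_unit_subset[OF H one hI xy(1)] xy(2)
    unfolding nonunits_def by blast
  ultimately show ?thesis using that by blast
qed

lemma one_absorbing_prime_hmul_subset:
  assumes H: "comm_mult_hyperring mul" and I: "one_absorbing_prime mul one I"
    and xy: "mul x y \<subseteq> I" "y \<notin> I" "x \<in> nonunits mul one" "y \<in> nonunits mul one"
    and a: "a \<in> nonunits mul one"
  shows "mul a x \<subseteq> I"
proof -
  have hI: "hyperideal mul I" using I unfolding one_absorbing_prime_def by blast
  have "setmul mul {a} (mul x y) \<subseteq> I"
    unfolding setmul_def using hyperideal_absorb[OF hI] xy(1) by blast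
  then have "setmul mul (mul a x) {y} \<subseteq> I" by (simp only: hmul_assoc[OF H])
  then show ?thesis
    using I xy(2-4) a unfolding one_absorbing_prime_def nonunits_def by blast
qed

lemma one_absorbing_prime_add_mem_nonunits:
  assumes H: "comm_mult_hyperring mul" and one: "has_identity mul one"
    and I: "one_absorbing_prime mul one I"
    and xy: "mul x y \<subseteq> I" "x \<notin> I" "y \<notin> I"
    and nu: "x \<in> nonunits mul one" "y \<in> nonunits mul one"
    and ab: "a \<in> nonunits mul one" "b \<in> nonunits mul one"
  shows "a + b \<in> nonunits mul one"
proof (rule ccontr)
  have hI: "hyperideal mul I" using I unfolding one_absorbing_prime_def by blast
  assume "a + b \<notin> nonunits mul one"
  moreover have "mul x (a + b) \<subseteq> I"
  proof
    fix e assume "e \<in> mul x (a + b)"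
    then obtain p q where "p \<in> mul x a" "q \<in> mul x b" "e = p + q"
      using hmul_add_subset[OF H, of x a b] unfolding setsum_add_def by blast
    moreover have "mul x a \<subseteq> I" "mul x b \<subseteq> I"
      using one_absorbing_prime_hmul_subset[OF H I xy(1,3) nu] ab
      by (simp_all add: hmul_commute[OF H, of x])
    ultimately show "e \<in> I" using hyperideal_add[OF hI] by blast
  qed
  ultimately show False
    using hyperideal_mem_if_mul_unit_subset[OF H one hI] xy(2)
    unfolding nonunits_def by blast
qed

theorem mainTheorem3:
  fixes mul :: "'a::ab_group_add \<Rightarrow> 'a \<Rightarrow> 'a set" and one :: 'a and I :: "'a set"
  assumes "comm_mult_hyperring mul"
    and "has_identity mul one"
    and "\<And>J. hyperideal mul J \<Longrightarrow> C_hyperideal mul J"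
    and "hyperideal mul I"
    and "one_absorbing_prime mul one I"
    and "\<not> prime_hyperideal mul I"
  shows "local_hyperring mul"
proof -
  obtain x y where xy: "mul x y \<subseteq> I" "x \<notin> I" "y \<notin> I"
    and nu: "x \<in> nonunits mul one" "y \<in> nonunits mul one"
    using one_absorbing_prime_not_prime_obtain[OF assms(1,2,5,6)] .
  show ?thesis
  proof (rule local_hyperring_if_nonunits_add_closed[OF assms(1,2)])
    show "nonunits mul one \<noteq> {}" using nu by blast
  next
    fix a b assume "a \<in> nonunits mul one" "b \<in> nonunits mul one"
    then show "a + b \<in> nonunits mul one"
      using one_absorbing_prime_add_mem_nonunits[OF assms(1,2,5) xy nu] by blast
  qed
qed

end
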